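(* If $q$ is a well-formed PIFO tree, then $\mathsf{flush}(q)$ is an interleaving of the lists in $\mathsf{snap}(q)$.
   Context: Fix a set $\mathsf{Pkt}$ of packets and a totally ordered set $\mathsf{Rk}$ of ranks (smaller is more favorable). PIFOs: for a set $S$, a PIFO over $S$ is a finite sequence of pairs $(s,r)\in S\times\mathsf{Rk}$ in insertion order; $\mathsf{PIFO}(S)$ is the set of these. $\mathsf{pop}_{\mathsf{PIFO}}(p)$ is undefined if $p$ is empty; otherwise it removes the entry of minimal rank (earliest-inserted among ties) and returns $(s,p')$, its element and the rest. $|p|$ is the number of entries, $|p|_s$ the number with element $s$. Topologies: $\mathsf{Topo}$ is the smallest set with $*\in\mathsf{Topo}$ and $\mathsf{Node}(\vec t)\in\mathsf{Topo}$ for $n\in\mathbb{N}$, $\vec t\in\mathsf{Topo}^n$. PIFO trees: $\mathsf{Leaf}(p)\in\mathsf{PIFOTree}( * )$ for $p\in\mathsf{PIFO}(\mathsf{Pkt})$; $\mathsf{Internal}(\vec q,p)\in\mathsf{PIFOTree}(\mathsf{Node}(\vec t))$ whenever $\vec t\in\mathsf{Topo}^n$, $p\in\mathsf{PIFO}(\{1,\dots,n\})$, $\vec q[i]\in\mathsf{PIFOTree}(\vec t[i])$. $\vec q[q'/i]$ replaces the $i$-th entry by $q'$. pop (partial): $\mathsf{pop}(\mathsf{Leaf}(p))=(pkt,\mathsf{Leaf}(p'))$ if $\mathsf{pop}_{\mathsf{PIFO}}(p)=(pkt,p')$; $\mathsf{pop}(\mathsf{Internal}(\vec q,p))=(pkt,\mathsf{Internal}(\vec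 q[q'/i],p'))$ if $\mathsf{pop}_{\mathsf{PIFO}}(p)=(i,p')$ and $\mathsf{pop}(\vec q[i])=(pkt,q')$; undefined otherwise. Size: $|\mathsf{Leaf}(p)|=|p|$, $|\mathsf{Internal}(\vec q,p)|=\sum_i|\vec q[i]|$. Well-formedness: $\vdash\mathsf{Leaf}(p)$ always; $\vdash\mathsf{Internal}(\vec q,p)$ iff for all $i$, $\vdash\vec q[i]$ and $|p|_i=|\vec q[i]|$. Words: finite sequences are written by juxtaposition, $\epsilon$ is the empty word, $\cdot$ concatenation. For a PIFO $p$, $\textsc{flush}(p)$ is the word of elements obtained by repeatedly applying $\mathsf{pop}_{\mathsf{PIFO}}$ until $p$ is empty, with the last popped element leftmost. Snapshot (a list of words): $\mathsf{snap}(\mathsf{Leaf}(p)) = [\textsc{flush}(p)]$ and $\mathsf{snap}(\mathsf{Internal}(\vec q,p)) = \mathsf{snap}(\vec q[1]) +\!\!+ \cdots +\!\!+ \mathsf{snap}(\vec q[n])$, where $[x]$ is the one-element list and $+\!\!+$ list concatenation. For a well-formed $q$, $\mathsf{flush}(q)$ is defined by induction on $|q|$: $\mathsf{flush}(q)=\epsilon$ if $|q|=0$, and $\mathsf{flush}(q)=\mathsf{flush}(q')\cdot pkt$ if $|q|>0$ and $\mathsf{pop}(q)=(pkt,q')$. A word $w$ is an interleaving of words $w_1,\dots,w_k$ if the positions of $w$ can be partitioned into $k$ sets such that, for each $j$, the letters of $w$ at the $j$-th set, read in order, form $w_j$. *)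

theory Defs
  imports Main
begin

text \<open>A PIFO over elements of type 's with ranks of type 'r is a list of
(element, rank) pairs in insertion order (head = earliest inserted).\<close>
type_synonym ('s, 'r) pifo = "('s \<times> 'r) list"

definition pop_index :: "('s, 'r::linorder) pifo \<Rightarrow> nat" where
  "pop_index p = (LEAST k. k < length p \<and> (\<forall>j<length p. snd (p ! k) \<le> snd (p ! j)))"

definition pop_pifo :: "('s, 'r::linorder) pifo \<Rightarrow> ('s \<times> ('s, 'r) pifo) option" where
  "pop_pifo p = (if p = [] then None
     else Some (fst (p ! pop_index p), take (pop_index p) p @ drop (Suc (pop_index p)) p))"

lemma pop_pifo_length:
  "pop_pifo p = Some (s, p') \<Longrightarrow> length p' < length p"
proof -
  assume a: "pop_pifo p = Some (s, p')"
  hence ne: "p \<noteq> []" by (auto simp: pop_pifo_def split: if_splits)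
  have "\<exists>k. k < length p \<and> (\<forall>j<length p. snd (p ! k) \<le> snd (p ! j))"
  proof -
    have fin: "finite (snd ` set p)" "snd ` set p \<noteq> {}" using ne by auto
    obtain x where x: "x \<in> set p" "snd x = Min (snd ` set p)"
      using Min_in[OF fin] by auto
    then obtain k where k: "k < length p" "p ! k = x" by (auto simp: in_set_conv_nth)
    have "\<forall>j<length p. snd (p ! k) \<le> snd (p ! j)"
      using k x fin by auto
    thus ?thesis using k by blast
  qed
  hence "pop_index p < length p" unfolding pop_index_def by (rule LeastI2_ex) auto
  thus ?thesis using a ne by (auto simp: pop_pifo_def)
qed

definition count_pifo :: "('s, 'r) pifo \<Rightarrow> 's \<Rightarrow> nat" where
  "count_pifo p s = length (filter (\<lambda>e. fst e = s) p)"

function flush_pifo :: "('s, 'r::linorder) pifo \<Rightarrow> 's list" where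
  "flush_pifo p = (case pop_pifo p of None \<Rightarrow> []
                    | Some (s, p') \<Rightarrow> flush_pifo p' @ [s])"
  by pat_completeness auto
termination
  by (relation "measure length") (auto dest: pop_pifo_length)

datatype topo = Star | Node "topo list"

text \<open>Untyped PIFO trees; the internal PIFO stores child indices 1..n.\<close>
datatype ('p, 'r) ptree =
    Leaf "('p, 'r) pifo"
  | Internal "('p, 'r) ptree list" "(nat, 'r) pifo"

fun has_topo :: "('p, 'r) ptree \<Rightarrow> topo \<Rightarrow> bool" where
  "has_topo (Leaf p) Star = True"
| "has_topo (Internal qs p) (Node ts) =
     (list_all2 has_topo qs ts
      \<and> (\<forall>e\<in>set p. 1 \<le> fst e \<and> fst e \<le> length ts))"
| "has_topo _ _ = False"

fun tsize :: "('p, 'r) ptree \<Rightarrow> nat" where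
  "tsize (Leaf p) = length p"
| "tsize (Internal qs p) = sum_list (map tsize qs)"

text \<open>Well-formedness (children indexed from 1; qs ! (i-1) is the i-th child).\<close>
fun wf_tree :: "('p, 'r) ptree \<Rightarrow> bool" where
  "wf_tree (Leaf p) = True"
| "wf_tree (Internal qs p) =
     ((\<forall>q\<in>set qs. wf_tree q) \<and>
      (\<forall>i<length qs. count_pifo p (Suc i) = tsize (qs ! i)))"

function tpop :: "('p, 'r::linorder) ptree \<Rightarrow> ('p \<times> ('p, 'r) ptree) option" where
  "tpop (Leaf p) = (case pop_pifo p of None \<Rightarrow> None
                     | Some (pkt, p') \<Rightarrow> Some (pkt, Leaf p'))"
| "tpop (Internal qs p) = (case pop_pifo p of None \<Rightarrow> None
     | Some (i, p') \<Rightarrow>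
         if 1 \<le> i \<and> i \<le> length qs then
           (case tpop (qs ! (i - 1)) of None \<Rightarrow> None
            | Some (pkt, q') \<Rightarrow> Some (pkt, Internal (qs[i - 1 := q']) p'))
         else None)"
  by pat_completeness auto
termination
proof (relation "measure size", goal_cases)
  case 1 show ?case by simp
next
  case (2 qs p x2 i p')
  hence "qs ! (i - 1) \<in> set qs" by (auto intro: nth_mem)
  hence "size (qs ! (i - 1)) \<le> size_list size qs" by (rule size_list_estimation') simp
  thus ?case by simp
qed

fun snap :: "('p, 'r::linorder) ptree \<Rightarrow> 'p list list" where
  "snap (Leaf p) = [flush_pifo p]"
| "snap (Internal qs p) = concat (map snap qs)"

text \<open>Realised with the size as fuel; on
  well-formed trees this agrees with the paper's (partial) definition.\<close>
fun flush_aux :: "nat \<Rightarrow> ('p, 'r::linorder) ptree \<Rightarrow> 'p list" where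
  "flush_aux 0 q = []"
| "flush_aux (Suc n) q = (case tpop q of None \<Rightarrow> []
                           | Some (pkt, q') \<Rightarrow> flush_aux n q' @ [pkt])"

definition tflush :: "('p, 'r::linorder) ptree \<Rightarrow> 'p list" where
  "tflush q = flush_aux (tsize q) q"

definition interleaving :: "'a list \<Rightarrow> 'a list list \<Rightarrow> bool" where
  "interleaving w ws \<longleftrightarrow>
     (\<exists>f :: nat \<Rightarrow> nat. (\<forall>i<length w. f i < length ws) \<and>
        (\<forall>j<length ws. nths w {i. i < length w \<and> f i = j} = ws ! j))"

end

theory Submission
  imports Defs
begin

text \<open>Popping a well-formed tree of positive size always succeeds and yields a
  well-formed tree that is one packet smaller; its snapshot differs from the old one
  only in that the popped packet is missing from the end of one component, namely
  the flush of the leaf the packet came from. Induction on the size therefore builds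
  the interleaving position by position, sending each packet of the flush to the
  component of its leaf.\<close>

lemma pop_pifo_remove_nth:
  assumes "p \<noteq> []"
  obtains k where "k < length p"
    and "pop_pifo p = Some (fst (p ! k), take k p @ drop (Suc k) p)"
proof
  have "Min (snd ` set p) \<in> snd ` set p"
    using assms by (intro Min_in) auto
  then obtain e where e: "e \<in> set p" "snd e = Min (snd ` set p)"
    by auto
  then obtain k where "k < length p" "p ! k = e" by (auto simp: in_set_conv_nth)
  then have "k < length p \<and> (\<forall>j<length p. snd (p ! k) \<le> snd (p ! j))"
    using e by auto
  then show "pop_index p < length p"
    unfolding pop_index_def by (rule LeastI2) simp
  then show "pop_pifo p = Some (fst (p ! pop_index p), take (pop_index p) p @ drop (Suc (pop_index p)) p)"
    using assms by (simp add: pop_pifo_def)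
qed

lemma count_pifo_append_Cons:
  "count_pifo (xs @ e # ys) s = count_pifo (xs @ ys) s + (if fst e = s then 1 else 0)"
  by (simp add: count_pifo_def)

lemma count_pifo_remove_nth:
  assumes "k < length p"
  shows "count_pifo p s = count_pifo (take k p @ drop (Suc k) p) s + (if fst (p ! k) = s then 1 else 0)"
  using count_pifo_append_Cons[of "take k p" "p ! k" "drop (Suc k) p" s]
  by (simp only: id_take_nth_drop[OF assms, symmetric])

(* The defining equation of flush_pifo unfolds forever under the simplifier. *)
declare flush_pifo.simps [simp del]

lemma flush_pifo_Nil [simp]: "flush_pifo [] = []"
  by (simp add: flush_pifo.simps pop_pifo_def)

lemma flush_pifo_pop:
  "pop_pifo p = Some (s, p') \<Longrightarrow> flush_pifo p = flush_pifo p' @ [s]"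
  by (simp add: flush_pifo.simps)

fun indices_in_range :: "('p, 'r) ptree \<Rightarrow> bool" where
  "indices_in_range (Leaf p) = True"
| "indices_in_range (Internal qs p) =
     ((\<forall>q\<in>set qs. indices_in_range q) \<and> (\<forall>e\<in>set p. 1 \<le> fst e \<and> fst e \<le> length qs))"

lemma has_topo_indices_in_range: "has_topo q t \<Longrightarrow> indices_in_range q"
proof (induction q t rule: has_topo.induct)
  case (2 qs p ts)
  have "indices_in_range q" if q: "q \<in> set qs" for q
  proof -
    obtain i where i: "i < length qs" "q = qs ! i"
      using q by (auto simp: in_set_conv_nth)
    with "2.prems" have "has_topo q (ts ! i)" "ts ! i \<in> set ts"
      by (auto simp: list_all2_conv_all_nth)
    then show ?thesis
      using "2.IH" q by blast
  qed
  moreover have "length qs = length ts"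
    using "2.prems" by (auto dest: list_all2_lengthD)
  ultimately show ?case
    using "2.prems" by auto
qed auto

lemma snap_tsize_0: "tsize q = 0 \<Longrightarrow> w \<in> set (snap q) \<Longrightarrow> w = []"
  by (induction q arbitrary: w rule: tsize.induct) auto

definition snoc_component :: "'a list list \<Rightarrow> 'a \<Rightarrow> 'a list list \<Rightarrow> bool" where
  "snoc_component ws x ws' \<longleftrightarrow> (\<exists>j<length ws. ws' = ws[j := ws ! j @ [x]])"

lemma snoc_component_concat_update:
  assumes "m < length wss" and "snoc_component ws x (wss ! m)"
  shows "snoc_component (concat (wss[m := ws])) x (concat wss)"
proof -
  obtain j where j: "j < length ws" "wss ! m = ws[j := ws ! j @ [x]]"
    using assms(2) unfolding snoc_component_def by blast
  define L where "L = concat (take m wss)"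
  define R where "R = concat (drop (Suc m) wss)"
  have "concat (wss[m := ws]) = L @ ws @ R"
    using assms(1) by (simp add: L_def R_def upd_conv_take_nth_drop)
  moreover have "concat wss = (L @ ws @ R)[length L + j := (L @ ws @ R) ! (length L + j) @ [x]]"
    using assms(1) j by (subst id_take_nth_drop[of m]) (simp_all add: L_def R_def list_update_append nth_append)
  ultimately show ?thesis
    unfolding snoc_component_def using j(1) by (intro exI[of _ "length L + j"]) simp
qed

lemma nths_cong:
  "(\<And>i. i < length xs \<Longrightarrow> i \<in> A \<longleftrightarrow> i \<in> B) \<Longrightarrow> nths xs A = nths xs B"
  unfolding nths_def by (auto intro!: arg_cong[where f = "map fst"] filter_cong dest: set_zip_rightD)

lemma interleaving_Nil: "\<forall>w\<in>set ws. w = [] \<Longrightarrow> interleaving [] ws"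
  unfolding interleaving_def by (auto simp: all_set_conv_all_nth)

lemma interleaving_snoc:
  assumes "interleaving w ws" and "snoc_component ws x ws'"
  shows "interleaving (w @ [x]) ws'"
proof -
  obtain f where f: "\<forall>i<length w. f i < length ws"
    "\<forall>k<length ws. nths w {i. i < length w \<and> f i = k} = ws ! k"
    using assms(1) unfolding interleaving_def by blast
  obtain j where j: "j < length ws" "ws' = ws[j := ws ! j @ [x]]"
    using assms(2) unfolding snoc_component_def by blast
  define g where "g = f(length w := j)"
  have "\<forall>i<length (w @ [x]). g i < length ws'"
    using f(1) j by (auto simp: g_def less_Suc_eq)
  moreover have "nths (w @ [x]) {i. i < length (w @ [x]) \<and> g i = k} = ws' ! k"
    if k: "k < length ws'" for k
  proof -
    have "nths w {i. i < length (w @ [x]) \<and> g i = k} = nths w {i. i < length w \<and> f i = k}"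
      by (rule nths_cong) (auto simp: g_def)
    then show ?thesis
      using f(2) j k by (auto simp: nths_append g_def nth_list_update)
  qed
  ultimately show ?thesis
    unfolding interleaving_def by blast
qed

lemma wf_tree_Internal_update:
  assumes "wf_tree (Internal qs p)" and "m < length qs"
    and "wf_tree q" and "tsize (qs ! m) = Suc (tsize q)"
    and "\<And>s. count_pifo p s = count_pifo p' s + (if s = Suc m then 1 else 0)"
  shows "wf_tree (Internal (qs[m := q]) p')"
proof -
  have "count_pifo p' (Suc i) = tsize (qs[m := q] ! i)" if "i < length qs" for i
    using assms that by (cases "i = m") (auto simp: nth_list_update)
  then show ?thesis
    using assms(1,3) by (auto dest: set_update_subset_insert[THEN subsetD])
qed

lemma tpop_snoc_component:
  assumes "wf_tree q" and "indices_in_range q" and "0 < tsize q"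
  obtains pkt q' where "tpop q = Some (pkt, q')" and "wf_tree q'" and "indices_in_range q'"
    and "tsize q = Suc (tsize q')" and "snoc_component (snap q') pkt (snap q)"
  using assms
proof (induction q arbitrary: thesis rule: tsize.induct)
  case (1 p)
  then have "p \<noteq> []"
    by simp
  then obtain k where k: "k < length p"
    and pop: "pop_pifo p = Some (fst (p ! k), take k p @ drop (Suc k) p)"
    by (rule pop_pifo_remove_nth)
  show ?case
    using k pop flush_pifo_pop[OF pop]
    by (intro "1.prems"(1)) (auto simp: snoc_component_def)
next
  case (2 qs p)
  obtain i where "i < length qs" "0 < tsize (qs ! i)"
    using "2.prems"(4) by (auto simp flip: neq0_conv simp: in_set_conv_nth)
  with "2.prems"(2) have "p \<noteq> []"
    by (auto simp: count_pifo_def)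
  then obtain k where k: "k < length p"
    and pop: "pop_pifo p = Some (fst (p ! k), take k p @ drop (Suc k) p)"
    by (rule pop_pifo_remove_nth)
  define p' where "p' = take k p @ drop (Suc k) p"
  define m where "m = fst (p ! k) - 1"
  have "1 \<le> fst (p ! k) \<and> fst (p ! k) \<le> length qs"
    using "2.prems"(3) nth_mem[OF k] by simp
  then have m: "m < length qs" "fst (p ! k) = Suc m"
    by (auto simp: m_def)
  have count: "count_pifo p s = count_pifo p' s + (if s = Suc m then 1 else 0)" for s
    using count_pifo_remove_nth[OF k, of s] m(2) by (auto simp: p'_def)
  have "0 < tsize (qs ! m)"
    using "2.prems"(2) m(1) count[of "Suc m"] by simp
  then obtain pkt q' where child: "tpop (qs ! m) = Some (pkt, q')" "wf_tree q'"
    "indices_in_range q'" "tsize (qs ! m) = Suc (tsize q')"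
    "snoc_component (snap q') pkt (snap (qs ! m))"
    using "2.IH"[OF nth_mem[OF m(1)]] "2.prems"(2,3) m(1) by auto
  show ?case
  proof (rule "2.prems"(1))
    show "tpop (Internal qs p) = Some (pkt, Internal (qs[m := q']) p')"
      using pop child(1) m by (simp add: p'_def)
    show "wf_tree (Internal (qs[m := q']) p')"
      using "2.prems"(2) m(1) child(2,4) count by (rule wf_tree_Internal_update)
    show "indices_in_range (Internal (qs[m := q']) p')"
      using "2.prems"(3) child(3) set_update_subset_insert[of qs m q']
        set_take_subset[of k p] set_drop_subset[of "Suc k" p]
      by (auto simp: p'_def)
    show "tsize (Internal qs p) = Suc (tsize (Internal (qs[m := q']) p'))"
      using m(1) child(4) elem_le_sum_list[of m "map tsize qs"]
      by (simp add: map_update sum_list_update)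
    show "snoc_component (snap (Internal (qs[m := q']) p')) pkt (snap (Internal qs p))"
      using snoc_component_concat_update[of m "map snap qs"] m(1) child(5)
      by (simp add: map_update)
  qed
qed

lemma tflush_tpop:
  "tpop q = Some (pkt, q') \<Longrightarrow> tsize q = Suc (tsize q') \<Longrightarrow> tflush q = tflush q' @ [pkt]"
  by (simp add: tflush_def)

lemma interleaving_tflush_snap:
  assumes "wf_tree q" and "indices_in_range q"
  shows "interleaving (tflush q) (snap q)"
  using assms
proof (induction "tsize q" arbitrary: q)
  case 0
  then show ?case
    using snap_tsize_0 interleaving_Nil by (simp add: tflush_def) blast
next
  case (Suc n)
  then have "0 < tsize q"
    by simp
  obtain pkt q' where pop: "tpop q = Some (pkt, q')" "wf_tree q'" "indices_in_range q'"
    "tsize q = Suc (tsize q')" "snoc_component (snap q') pkt (snap q)"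
    using Suc.prems \<open>0 < tsize q\<close> by (rule tpop_snoc_component)
  then have "interleaving (tflush q') (snap q')"
    using Suc.hyps by simp
  then show ?case
    using pop by (simp add: tflush_tpop interleaving_snoc)
qed

theorem lemma4p5:
  fixes q :: "('p, 'r::linorder) ptree" and t :: topo
  assumes "has_topo q t" and "wf_tree q"
  shows "interleaving (tflush q) (snap q)"
  using assms by (intro interleaving_tflush_snap has_topo_indices_in_range)

end
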